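(* Let $(\Omega,\mu)$ be a measure space, $p\ge3$, and let $(u_k)$, $u$ be real-valued functions in $L^p(\Omega,\mu)$ such that $u_k\rightharpoonup u$ weakly and $u_k\rightharpoondown u$ in $L^p(\Omega,\mu)$. Then $$\liminf_{k\to\infty}\Big(\int_\Omega|u_k|^pd\mu-\int_\Omega|u|^pd\mu-\int_\Omega|u_k-u|^pd\mu\Big)\ge0.$$
   Context: $u_k\rightharpoondown u$ (Δ-convergence) in a Banach space $X$ means: for every $v\in X$, $\limsup_{k\to\infty}(\|u_k-u\|-\|u_k-v\|)\le0$. *)

theory Defs
  imports "HOL-Analysis.Analysis"
begin

definition memLp :: "'a measure \<Rightarrow> real \<Rightarrow> ('a \<Rightarrow> real) \<Rightarrow> bool" where
  "memLp M p f \<longleftrightarrow> f \<in> borel_measurable M \<and> integrable M (\<lambda>x. \<bar>f x\<bar> powr p)"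

definition Lp_norm :: "'a measure \<Rightarrow> real \<Rightarrow> ('a \<Rightarrow> real) \<Rightarrow> real" where
  "Lp_norm M p f = (\<integral>x. \<bar>f x\<bar> powr p \<partial>M) powr (1 / p)"

definition Lp_dual :: "'a measure \<Rightarrow> real \<Rightarrow> (('a \<Rightarrow> real) \<Rightarrow> real) set" where
  "Lp_dual M p = {\<phi>.
     (\<forall>f g a b. memLp M p f \<longrightarrow> memLp M p g \<longrightarrow>
        \<phi> (\<lambda>x. a * f x + b * g x) = a * \<phi> f + b * \<phi> g) \<and>
     (\<exists>C. \<forall>f. memLp M p f \<longrightarrow> \<bar>\<phi> f\<bar> \<le> C * Lp_norm M p f)}"

definition Lp_weak_conv :: "'a measure \<Rightarrow> real \<Rightarrow> (nat \<Rightarrow> 'a \<Rightarrow> real) \<Rightarrow> ('a \<Rightarrow> real) \<Rightarrow> bool" where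
  "Lp_weak_conv M p u U \<longleftrightarrow> (\<forall>\<phi>\<in>Lp_dual M p. (\<lambda>k. \<phi> (u k)) \<longlonglongrightarrow> \<phi> U)"

definition Lp_Delta_conv :: "'a measure \<Rightarrow> real \<Rightarrow> (nat \<Rightarrow> 'a \<Rightarrow> real) \<Rightarrow> ('a \<Rightarrow> real) \<Rightarrow> bool" where
  "Lp_Delta_conv M p u U \<longleftrightarrow> (\<forall>v. memLp M p v \<longrightarrow>
     limsup (\<lambda>k. ereal (Lp_norm M p (\<lambda>x. u k x - U x) - Lp_norm M p (\<lambda>x. u k x - v x))) \<le> 0)"

end

theory Submission
  imports Defs
begin

text \<open>Write w_k = u_k - U and J v = \<bar>v\<bar>^(p-2) v for the duality map of L^p. For p \<ge> 3 the
  pointwise inequality \<bar>a + b\<bar>^p - \<bar>a\<bar>^p - \<bar>b\<bar>^p \<ge> p (J a) b + p (J b) a bounds the quantity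
  in question from below by p \<langle>J U, w_k\<rangle> + p \<langle>J w_k, U\<rangle>. The first pairing tends to 0 by weak
  convergence. For the second, \<Delta>-convergence tested against (1 - t) U says that
  \<parallel>w_k + t U\<parallel> is asymptotically not smaller than \<parallel>w_k\<parallel>, while a second-order Taylor expansion of
  \<parallel>w_k + t U\<parallel>^p in t shows that a pairing \<langle>J w_k, U\<rangle> \<le> -\<delta> would make it smaller by a fixed
  amount once t is small. The Taylor remainder is uniform in k because weakly convergent
  sequences are bounded.\<close>

text \<open>sgn_powr p is (1/p) times the derivative of x \<mapsto> \<bar>x\<bar> powr p; applied pointwise,
  it is the duality map v \<mapsto> \<bar>v\<bar>^(p-2) v of L^p.\<close>

definition sgn_powr :: "real \<Rightarrow> real \<Rightarrow> real" where
  "sgn_powr p x = sgn x * \<bar>x\<bar> powr (p - 1)"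

lemma abs_sgn_powr: "\<bar>sgn_powr p x\<bar> = \<bar>x\<bar> powr (p - 1)"
  by (auto simp: sgn_powr_def abs_mult sgn_if)

lemma mult_sgn_powr_self: "p > 1 \<Longrightarrow> x * sgn_powr p x = \<bar>x\<bar> powr p"
  by (cases "x = 0") (auto simp: sgn_powr_def sgn_if powr_diff)

lemma has_real_derivative_abs_powr_nonzero:
  fixes x r :: real assumes "x \<noteq> 0"
  shows "((\<lambda>y. \<bar>y\<bar> powr r) has_real_derivative r * sgn_powr r x) (at x)"
proof (cases "x > 0")
  case True
  have "((\<lambda>y. y powr r) has_real_derivative r * x powr (r - 1)) (at x)"
    using True by (rule has_real_derivative_powr)
  then have "((\<lambda>y. \<bar>y\<bar> powr r) has_real_derivative r * x powr (r - 1)) (at x)"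
    by (rule has_field_derivative_transform_within_open[where S="{0<..}"]) (use True in auto)
  then show ?thesis using True by (simp add: sgn_powr_def)
next
  case False
  then have neg: "x < 0" using assms by simp
  have "((\<lambda>y. (-y) powr r) has_real_derivative r * (-x) powr (r - of_nat 1) * -1) (at x)"
    by (rule DERIV_fun_powr) (auto intro!: derivative_eq_intros simp: neg)
  then have "((\<lambda>y. \<bar>y\<bar> powr r) has_real_derivative r * (-x) powr (r - of_nat 1) * -1) (at x)"
    by (rule has_field_derivative_transform_within_open[where S="{..<0}"]) (use neg in auto)
  then show ?thesis using neg by (simp add: sgn_powr_def)
qed

lemma has_real_derivative_abs_powr:
  fixes p x :: real assumes "p > 1"
  shows "((\<lambda>y. \<bar>y\<bar> powr p) has_real_derivative p * sgn_powr p x) (at x)"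
proof (cases "x = 0")
  case True
  have "((\<lambda>y. \<bar>y\<bar> powr (p - 1)) \<longlongrightarrow> 0) (at (0::real))"
    by (rule tendsto_zero_powrI) (auto intro!: tendsto_eq_intros simp: assms)
  then have "((\<lambda>y. \<bar>(\<bar>y\<bar> powr p - \<bar>0\<bar> powr p) / (y - 0)\<bar>) \<longlongrightarrow> 0) (at (0::real))"
  proof (rule Lim_transform_eventually)
    show "\<forall>\<^sub>F y in at 0. \<bar>y\<bar> powr (p - 1) = \<bar>(\<bar>y\<bar> powr p - \<bar>0\<bar> powr p) / (y - 0)\<bar>"
      unfolding eventually_at using assms
      by (intro exI[of _ 1]) (auto simp: powr_diff abs_divide)
  qed
  then show ?thesis
    using True unfolding has_field_derivative_iff by (auto intro: tendsto_rabs_zero_cancel simp: sgn_powr_def)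
qed (rule has_real_derivative_abs_powr_nonzero)

lemma has_real_derivative_sgn_powr:
  fixes p x :: real assumes "p > 2"
  shows "(sgn_powr p has_real_derivative (p - 1) * \<bar>x\<bar> powr (p - 2)) (at x)"
proof (cases "x = 0")
  case True
  have "((\<lambda>y. \<bar>y\<bar> powr (p - 2)) \<longlongrightarrow> 0) (at (0::real))"
    by (rule tendsto_zero_powrI) (auto intro!: tendsto_eq_intros simp: assms)
  then have "((\<lambda>y. \<bar>(sgn_powr p y - sgn_powr p 0) / (y - 0)\<bar>) \<longlongrightarrow> 0) (at (0::real))"
  proof (rule Lim_transform_eventually)
    show "\<forall>\<^sub>F y in at 0. \<bar>y\<bar> powr (p - 2) = \<bar>(sgn_powr p y - sgn_powr p 0) / (y - 0)\<bar>"
      unfolding eventually_at using assms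
      by (intro exI[of _ 1]) (auto simp: sgn_powr_def powr_diff abs_divide abs_mult power2_eq_square)
  qed
  then show ?thesis using True
    unfolding has_field_derivative_iff by (auto intro: tendsto_rabs_zero_cancel)
next
  case False
  show ?thesis
  proof (cases "x > 0")
    case True
    have "((\<lambda>y. y powr (p - 1)) has_real_derivative (p - 1) * x powr (p - 1 - 1)) (at x)"
      using True by (rule has_real_derivative_powr)
    then have "(sgn_powr p has_real_derivative (p - 1) * x powr (p - 1 - 1)) (at x)"
      by (rule has_field_derivative_transform_within_open[where S="{0<..}"])
        (use True in \<open>auto simp: sgn_powr_def\<close>)
    then show ?thesis using True by (simp add: algebra_simps)
  next
    case False
    then have neg: "x < 0" using \<open>x \<noteq> 0\<close> by simp
    have "((\<lambda>y. (-y) powr (p - 1)) has_real_derivative (p - 1) * (-x) powr (p - 1 - of_nat 1) * -1) (at x)"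
      by (rule DERIV_fun_powr) (auto intro!: derivative_eq_intros simp: neg)
    then have "((\<lambda>y. - ((-y) powr (p - 1))) has_real_derivative - ((p - 1) * (-x) powr (p - 1 - of_nat 1) * -1)) (at x)"
      by (rule DERIV_minus)
    then have "(sgn_powr p has_real_derivative - ((p - 1) * (-x) powr (p - 1 - of_nat 1) * -1)) (at x)"
      by (rule has_field_derivative_transform_within_open[where S="{..<0}"])
        (use neg in \<open>auto simp: sgn_powr_def\<close>)
    then show ?thesis using neg by (simp add: algebra_simps)
  qed
qed

lemma has_real_derivative_sgn_powr_chain [derivative_intros]:
  "p > 2 \<Longrightarrow> (f has_real_derivative D) (at x) \<Longrightarrow>
   ((\<lambda>x. sgn_powr p (f x)) has_real_derivative (p - 1) * \<bar>f x\<bar> powr (p - 2) * D) (at x)"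
  using DERIV_chain2[OF has_real_derivative_sgn_powr] by blast

lemma has_real_derivative_abs_powr_chain [derivative_intros]:
  "p > 1 \<Longrightarrow> (f has_real_derivative D) (at x) \<Longrightarrow>
   ((\<lambda>x. \<bar>f x\<bar> powr p) has_real_derivative p * sgn_powr p (f x) * D) (at x)"
  using DERIV_chain2[OF has_real_derivative_abs_powr] by blast

lemma continuous_on_sgn_powr: "p > 2 \<Longrightarrow> continuous_on S (sgn_powr p)"
  using has_real_derivative_sgn_powr by (meson DERIV_isCont continuous_at_imp_continuous_on)

lemma powr_above_tangent:
  fixes r x y :: real assumes r: "r \<ge> 1" and x: "0 \<le> x" and y: "0 \<le> y"
  shows "x powr r + r * x powr (r - 1) * (y - x) \<le> y powr r"
proof (cases "x = 0 \<or> y = 0")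
  case True
  have "x powr r \<le> r * x powr r"
    using mult_right_mono[OF r, of "x powr r"] by simp
  moreover have "x * x powr (r - 1) = x powr r" if "x > 0" using that by (simp add: powr_diff)
  ultimately show ?thesis
    using True x by (cases "x = 0") (auto simp: algebra_simps)
next
  case False
  then have xp: "x > 0" and yp: "y > 0" using x y by auto
  have "r * x powr (r - 1) * (y - x) \<le> y powr r - x powr r"
  proof (rule convex_on_imp_above_tangent[OF powr_convex[OF r]])
    show "x \<in> interior {0<..}" using xp by (subst interior_open) auto
    show "((\<lambda>x. x powr r) has_real_derivative r * x powr (r - 1)) (at x within {0<..})"
      by (rule has_field_derivative_at_within, rule has_real_derivative_powr[OF xp])
  qed (use yp in auto)
  then show ?thesis by simp
qed

lemma abs_powr_above_tangent:
  fixes r x y :: real assumes r: "r \<ge> 1"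
  shows "\<bar>x\<bar> powr r + r * sgn_powr r x * (y - x) \<le> \<bar>y\<bar> powr r"
proof -
  have "sgn x * (y - x) \<le> \<bar>y\<bar> - \<bar>x\<bar>"
    by (cases "x > 0"; cases "x < 0") (auto simp: sgn_if)
  then have "r * sgn_powr r x * (y - x) \<le> r * \<bar>x\<bar> powr (r - 1) * (\<bar>y\<bar> - \<bar>x\<bar>)"
    using r by (simp add: sgn_powr_def mult.assoc mult.left_commute[of "sgn x"] mult_left_mono)
  then show ?thesis using powr_above_tangent[OF r, of "\<bar>x\<bar>" "\<bar>y\<bar>"] by simp
qed

text \<open>The bracket vanishes at b = 0, and its derivative in b is nonnegative for b \<noteq> 0 by
  convexity of \<bar>x\<bar>^(p-2); this needs p - 2 \<ge> 1.\<close>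

lemma sgn_powr_add_diff_sign:
  fixes p a b :: real assumes p: "p \<ge> 3"
  shows "0 \<le> b * (sgn_powr p (a + b) - sgn_powr p a - sgn_powr p b - (p - 1) * \<bar>b\<bar> powr (p - 2) * a)"
proof -
  define G where "G b = sgn_powr p (a + b) - sgn_powr p a - sgn_powr p b - (p - 1) * \<bar>b\<bar> powr (p - 2) * a" for b
  have G0: "G 0 = 0" using p by (simp add: G_def sgn_powr_def)
  have G_cont: "continuous_on S G" for S
  proof -
    have c1: "continuous_on S (\<lambda>x. sgn_powr p (a + x))"
      by (rule continuous_on_compose2[of UNIV "sgn_powr p"])
        (use p in \<open>auto intro!: continuous_on_sgn_powr continuous_intros\<close>)
    have c2: "continuous_on S (\<lambda>x. \<bar>x\<bar> powr (p - 2))"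
      by (rule continuous_on_powr') (use p in \<open>auto intro: continuous_intros\<close>)
    show ?thesis unfolding G_def using p
      by (intro continuous_intros c1 c2 continuous_on_sgn_powr) auto
  qed
  have G_deriv: "\<exists>y. (G has_real_derivative y) (at b) \<and> y \<ge> 0" if "b \<noteq> 0" for b
  proof -
    have "((\<lambda>z. \<bar>z\<bar> powr (p - 2)) has_real_derivative (p - 2) * sgn_powr (p - 2) b) (at b)"
      by (rule has_real_derivative_abs_powr_nonzero[OF that])
    then have "((\<lambda>z. (p - 1) * \<bar>z\<bar> powr (p - 2) * a) has_real_derivative
        (p - 1) * ((p - 2) * sgn_powr (p - 2) b) * a) (at b)"
      by (intro DERIV_cmult_right DERIV_cmult)
    then have "(G has_real_derivative (p - 1) * \<bar>a + b\<bar> powr (p - 2) * (0 + 1) - 0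
        - (p - 1) * \<bar>b\<bar> powr (p - 2) * 1 - (p - 1) * ((p - 2) * sgn_powr (p - 2) b) * a) (at b)"
      unfolding G_def using p by (intro derivative_intros) auto
    then have "(G has_real_derivative (p - 1) * (\<bar>a + b\<bar> powr (p - 2) - \<bar>b\<bar> powr (p - 2)
        - (p - 2) * sgn_powr (p - 2) b * ((a + b) - b))) (at b)"
      by (simp add: algebra_simps)
    moreover have "\<bar>b\<bar> powr (p - 2) + (p - 2) * sgn_powr (p - 2) b * ((a + b) - b) \<le> \<bar>a + b\<bar> powr (p - 2)"
      using p by (intro abs_powr_above_tangent) auto
    ultimately show ?thesis using p by (intro exI[of _ _] conjI) auto
  qed
  have "0 \<le> b * G b"
  proof (cases "b \<ge> 0")
    case True
    have "G 0 \<le> G b"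
      by (rule DERIV_nonneg_imp_increasing_open[OF True]) (use G_deriv G_cont in auto)
    then show ?thesis using True G0 by simp
  next
    case False
    have "G b \<le> G 0"
      by (rule DERIV_nonneg_imp_increasing_open) (use False G_deriv G_cont in auto)
    then show ?thesis using False G0 by (simp add: mult_nonpos_nonpos)
  qed
  then show ?thesis by (simp add: G_def)
qed

lemma sgn_powr_cross_le_abs_powr_add:
  fixes p a b :: real assumes p: "p \<ge> 3"
  shows "p * sgn_powr p a * b + p * sgn_powr p b * a \<le> \<bar>a + b\<bar> powr p - \<bar>a\<bar> powr p - \<bar>b\<bar> powr p"
proof -
  define F where "F b = \<bar>a + b\<bar> powr p - \<bar>a\<bar> powr p - \<bar>b\<bar> powr p - p * sgn_powr p a * b - p * sgn_powr p b * a" for b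
  define F' where "F' b = p * (sgn_powr p (a + b) - sgn_powr p a - sgn_powr p b - (p - 1) * \<bar>b\<bar> powr (p - 2) * a)" for b
  have F_deriv: "(F has_real_derivative F' b) (at b)" for b
    unfolding F_def F'_def using p
    by (auto intro!: derivative_eq_intros simp: algebra_simps)
  have F'_sign: "0 \<le> b * F' b" for b
    using mult_nonneg_nonneg[OF _ sgn_powr_add_diff_sign[OF p, where a=a and b=b], of p] p
    by (simp add: F'_def mult.left_commute)
  have F_cont: "continuous_on S F" for S
    using F_deriv by (meson DERIV_isCont continuous_at_imp_continuous_on)
  have "F 0 \<le> F b"
  proof (cases "b \<ge> 0")
    case True
    show ?thesis
    proof (rule DERIV_nonneg_imp_increasing_open[OF True])
      fix x :: real assume "0 < x"
      then show "\<exists>y. (F has_real_derivative y) (at x) \<and> 0 \<le> y"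
        using F_deriv F'_sign[of x] by (auto simp: zero_le_mult_iff)
    qed (rule F_cont)
  next
    case False
    show ?thesis
    proof (rule DERIV_nonpos_imp_decreasing_open[of b 0])
      fix x :: real assume "x < 0"
      then show "\<exists>y. (F has_real_derivative y) (at x) \<and> y \<le> 0"
        using F_deriv F'_sign[of x] by (auto simp: zero_le_mult_iff)
    qed (use False F_cont in auto)
  qed
  moreover have "F 0 = 0" using p by (simp add: F_def sgn_powr_def)
  ultimately show ?thesis by (simp add: F_def sgn_powr_def)
qed

lemma sgn_powr_increment_le:
  fixes p a b s :: real assumes p: "p > 2" and s: "0 \<le> s" "s \<le> 1"
  shows "(sgn_powr p (b + s * a) - sgn_powr p b) * a \<le> (p - 1) * (\<bar>a\<bar> + \<bar>b\<bar>) powr (p - 2) * s * a\<^sup>2"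
proof -
  define L where "L = (\<bar>a\<bar> + \<bar>b\<bar>) powr (p - 2)"
  define m where "m \<sigma> = (p - 1) * L * \<sigma> * a\<^sup>2 - (sgn_powr p (b + \<sigma> * a) - sgn_powr p b) * a" for \<sigma>
  have m_deriv: "(m has_real_derivative (p - 1) * (L - \<bar>b + \<sigma> * a\<bar> powr (p - 2)) * a\<^sup>2) (at \<sigma>)" for \<sigma>
    unfolding m_def using p by (auto intro!: derivative_eq_intros simp: algebra_simps power2_eq_square)
  have "m 0 \<le> m s"
  proof (rule DERIV_nonneg_imp_increasing_open[OF s(1)])
    fix \<sigma> assume "0 < \<sigma>" "\<sigma> < s"
    then have "\<bar>\<sigma> * a\<bar> \<le> \<bar>a\<bar>"
      using s by (auto simp: abs_mult intro: mult_left_le_one_le)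
    then have "\<bar>b + \<sigma> * a\<bar> \<le> \<bar>a\<bar> + \<bar>b\<bar>" by linarith
    then have "\<bar>b + \<sigma> * a\<bar> powr (p - 2) \<le> L" unfolding L_def using p by (intro powr_mono2) auto
    then show "\<exists>y. (m has_real_derivative y) (at \<sigma>) \<and> 0 \<le> y"
      using m_deriv[of \<sigma>] p by (intro exI conjI) auto
  qed (use m_deriv in \<open>meson DERIV_isCont continuous_at_imp_continuous_on\<close>)
  then show ?thesis by (simp add: m_def L_def)
qed

lemma abs_powr_taylor_le:
  fixes p a b t :: real assumes p: "p > 2" and t: "0 \<le> t" "t \<le> 1"
  shows "\<bar>b + t * a\<bar> powr p \<le> \<bar>b\<bar> powr p + p * t * sgn_powr p b * a
           + p * (p - 1) / 2 * (\<bar>a\<bar> + \<bar>b\<bar>) powr (p - 2) * a\<^sup>2 * t\<^sup>2"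
proof -
  define L where "L = (\<bar>a\<bar> + \<bar>b\<bar>) powr (p - 2)"
  define h where "h s = \<bar>b + s * a\<bar> powr p - \<bar>b\<bar> powr p - p * s * sgn_powr p b * a - p * (p - 1) / 2 * L * a\<^sup>2 * s\<^sup>2" for s
  have h_deriv: "(h has_real_derivative p * ((sgn_powr p (b + s * a) - sgn_powr p b) * a - (p - 1) * L * s * a\<^sup>2)) (at s)" for s
    unfolding h_def using p by (auto intro!: derivative_eq_intros simp: field_simps power2_eq_square)
  have "h t \<le> h 0"
  proof (rule DERIV_nonpos_imp_decreasing_open[OF t(1)])
    fix s assume "0 < s" "s < t"
    then have "(sgn_powr p (b + s * a) - sgn_powr p b) * a \<le> (p - 1) * L * s * a\<^sup>2"
      unfolding L_def using t p by (intro sgn_powr_increment_le) auto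
    then show "\<exists>y. (h has_real_derivative y) (at s) \<and> y \<le> 0"
      using h_deriv[of s] p by (intro exI conjI) (auto simp: mult_nonneg_nonpos)
  qed (use h_deriv in \<open>meson DERIV_isCont continuous_at_imp_continuous_on\<close>)
  then show ?thesis using p by (simp add: h_def L_def sgn_powr_def)
qed

lemma abs_add_powr_le:
  fixes x y p :: real assumes "p > 0"
  shows "\<bar>x + y\<bar> powr p \<le> 2 powr p * (\<bar>x\<bar> powr p + \<bar>y\<bar> powr p)"
proof -
  define m where "m = max \<bar>x\<bar> \<bar>y\<bar>"
  have "\<bar>x + y\<bar> \<le> 2 * m" unfolding m_def by linarith
  then have "\<bar>x + y\<bar> powr p \<le> (2 * m) powr p" using assms by (intro powr_mono2) auto
  also have "\<dots> = 2 powr p * m powr p" by (simp add: powr_mult m_def)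
  also have "m powr p \<le> \<bar>x\<bar> powr p + \<bar>y\<bar> powr p" by (auto simp: m_def max_def)
  finally show ?thesis by (simp add: mult_left_mono)
qed

lemma abs_powr_add_scaled_le:
  fixes p a b t :: real assumes p: "p > 2" and t: "0 \<le> t" "t \<le> 1"
  shows "\<bar>b + t * a\<bar> powr p \<le> \<bar>b\<bar> powr p + p * t * sgn_powr p b * a
           + p * (p - 1) / 2 * 2 powr p * t\<^sup>2 * (\<bar>a\<bar> powr p + \<bar>b\<bar> powr p)"
proof -
  define s where "s = \<bar>a\<bar> + \<bar>b\<bar>"
  have "a\<^sup>2 \<le> s powr 2"
    by (cases "s = 0") (auto simp: s_def abs_le_square_iff[symmetric] powr_realpow)
  then have "s powr (p - 2) * a\<^sup>2 \<le> s powr (p - 2) * s powr 2"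
    by (intro mult_left_mono) auto
  also have "\<dots> = s powr p" by (subst powr_add[symmetric]) simp
  also have "\<dots> \<le> 2 powr p * (\<bar>a\<bar> powr p + \<bar>b\<bar> powr p)"
    using abs_add_powr_le[of p "\<bar>a\<bar>" "\<bar>b\<bar>"] p by (simp add: s_def)
  finally have "p * (p - 1) / 2 * t\<^sup>2 * (s powr (p - 2) * a\<^sup>2)
      \<le> p * (p - 1) / 2 * t\<^sup>2 * (2 powr p * (\<bar>a\<bar> powr p + \<bar>b\<bar> powr p))"
    using p by (intro mult_left_mono) auto
  moreover have "p * (p - 1) / 2 * s powr (p - 2) * a\<^sup>2 * t\<^sup>2 = p * (p - 1) / 2 * t\<^sup>2 * (s powr (p - 2) * a\<^sup>2)"
    "p * (p - 1) / 2 * t\<^sup>2 * (2 powr p * (\<bar>a\<bar> powr p + \<bar>b\<bar> powr p))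
      = p * (p - 1) / 2 * 2 powr p * t\<^sup>2 * (\<bar>a\<bar> powr p + \<bar>b\<bar> powr p)"
    by (simp_all add: mult_ac)
  ultimately show ?thesis
    using abs_powr_taylor_le[OF p t, of b a] unfolding s_def by linarith
qed

lemma powr_gap_imp_gap:
  fixes p y z \<eta> R :: real
  assumes p: "p \<ge> 1" and y: "0 \<le> y" "y \<le> R" and z: "0 \<le> z" and \<eta>: "\<eta> > 0"
    and gap: "z powr p \<le> y powr p - \<eta>"
  shows "\<eta> / (p * R powr (p - 1)) \<le> y - z"
proof -
  have "y powr p + p * y powr (p - 1) * (z - y) \<le> z powr p"
    by (rule powr_above_tangent[OF p y(1) z])
  then have \<eta>_le: "\<eta> \<le> p * y powr (p - 1) * (y - z)" using gap by (simp add: algebra_simps)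
  have yz: "y - z > 0"
  proof (rule ccontr)
    assume "\<not> y - z > 0"
    then have "p * y powr (p - 1) * (y - z) \<le> 0" using p by (intro mult_nonneg_nonpos) auto
    with \<eta>_le \<eta> show False by simp
  qed
  then have "y > 0" "R > 0" using y z by auto
  have "p * y powr (p - 1) * (y - z) \<le> p * R powr (p - 1) * (y - z)"
    using p y yz by (intro mult_right_mono mult_left_mono powr_mono2) auto
  with \<eta>_le \<open>R > 0\<close> p show ?thesis by (simp add: divide_le_eq mult.commute)
qed

lemma Lp_norm_nonneg: "Lp_norm M p f \<ge> 0"
  by (simp add: Lp_norm_def)

lemma Lp_norm_powr:
  assumes "p > 0" shows "Lp_norm M p f powr p = (\<integral>x. \<bar>f x\<bar> powr p \<partial>M)"
proof -
  have "(\<integral>x. \<bar>f x\<bar> powr p \<partial>M) \<ge> 0" by (intro integral_nonneg_AE) auto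
  then show ?thesis using assms by (simp add: Lp_norm_def powr_powr)
qed

lemma memLp_linear_combination:
  assumes p: "p > 0" and f: "memLp M p f" and g: "memLp M p g"
  shows "memLp M p (\<lambda>x. a * f x + b * g x)"
proof -
  have [measurable]: "f \<in> borel_measurable M" "g \<in> borel_measurable M"
    using f g by (auto simp: memLp_def)
  have "integrable M (\<lambda>x. 2 powr p * (\<bar>a\<bar> powr p * \<bar>f x\<bar> powr p + \<bar>b\<bar> powr p * \<bar>g x\<bar> powr p))"
    using f g by (auto simp: memLp_def)
  then have "integrable M (\<lambda>x. \<bar>a * f x + b * g x\<bar> powr p)"
  proof (rule Bochner_Integration.integrable_bound)
    show "AE x in M. norm (\<bar>a * f x + b * g x\<bar> powr p)
       \<le> norm (2 powr p * (\<bar>a\<bar> powr p * \<bar>f x\<bar> powr p + \<bar>b\<bar> powr p * \<bar>g x\<bar> powr p))"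
      using abs_add_powr_le[OF p, of "a * f _" "b * g _"]
      by (intro AE_I2) (simp add: abs_mult powr_mult)
  qed measurable
  then show ?thesis unfolding memLp_def by simp
qed

lemma memLp_diff:
  "p > 0 \<Longrightarrow> memLp M p f \<Longrightarrow> memLp M p g \<Longrightarrow> memLp M p (\<lambda>x. f x - g x)"
  using memLp_linear_combination[of p M f g 1 "-1"] by simp

lemma AE_eq_0_if_Lp_norm_eq_0:
  assumes p: "p > 0" and f: "memLp M p f" and "Lp_norm M p f = 0"
  shows "AE x in M. f x = 0"
proof -
  have "(\<integral>x. \<bar>f x\<bar> powr p \<partial>M) = 0" using Lp_norm_powr[OF p, of M f] assms by simp
  then have "AE x in M. \<bar>f x\<bar> powr p = 0"
    using f by (subst (asm) integral_nonneg_eq_0_iff_AE) (auto simp: memLp_def)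
  then show ?thesis by auto
qed

lemma integrable_mult_sgn_powr:
  assumes p: "p > 1" and f: "memLp M p f" and v: "memLp M p v"
  shows "integrable M (\<lambda>x. f x * sgn_powr p (v x))"
proof (rule Bochner_Integration.integrable_bound)
  show "integrable M (\<lambda>x. \<bar>f x\<bar> powr p + \<bar>v x\<bar> powr p)"
    using f v by (auto simp: memLp_def)
  have q: "p / (p - 1) > 1" "1 / p + 1 / (p / (p - 1)) = 1" "(p - 1) * (p / (p - 1)) = p"
    using p by (auto simp: field_simps)
  have "\<bar>f x\<bar> * \<bar>v x\<bar> powr (p - 1) \<le> \<bar>f x\<bar> powr p / p + \<bar>v x\<bar> powr p / (p / (p - 1))" for x
    using Youngs_inequality[OF p q(1,2), of "\<bar>f x\<bar>" "\<bar>v x\<bar> powr (p - 1)"] p by (simp add: powr_powr q(3))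
  also have "\<bar>f x\<bar> powr p / p + \<bar>v x\<bar> powr p / (p / (p - 1)) \<le> \<bar>f x\<bar> powr p + \<bar>v x\<bar> powr p" for x
    using p q by (intro add_mono divide_left_mono[where b=1, simplified]) auto
  finally show "AE x in M. norm (f x * sgn_powr p (v x)) \<le> norm (\<bar>f x\<bar> powr p + \<bar>v x\<bar> powr p)"
    by (simp add: abs_mult abs_sgn_powr)
qed (use f v in \<open>auto simp: memLp_def sgn_powr_def\<close>)

lemma Youngs_inequality_scaled:
  fixes a b \<alpha> \<beta> p q :: real
  assumes \<alpha>\<beta>: "\<alpha> > 0" "\<beta> > 0" and p: "p > 1" and q: "q > 1" "1 / p + 1 / q = 1" "(p - 1) * q = p"
  shows "\<bar>a\<bar> * \<bar>b\<bar> powr (p - 1) / (\<alpha> * \<beta> powr (p - 1))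
      \<le> \<bar>a\<bar> powr p / (p * \<alpha> powr p) + \<bar>b\<bar> powr p / (q * \<beta> powr p)"
proof -
  have "(\<bar>a\<bar> / \<alpha>) * (\<bar>b\<bar> / \<beta>) powr (p - 1)
      \<le> (\<bar>a\<bar> / \<alpha>) powr p / p + ((\<bar>b\<bar> / \<beta>) powr (p - 1)) powr q / q"
    using \<alpha>\<beta> by (intro Youngs_inequality p q) auto
  also have "\<dots> = \<bar>a\<bar> powr p / (p * \<alpha> powr p) + \<bar>b\<bar> powr p / (q * \<beta> powr p)"
    using \<alpha>\<beta> by (simp add: powr_powr q(3) powr_divide) (simp add: ac_simps)
  finally show ?thesis using \<alpha>\<beta> by (simp add: powr_divide)
qed

lemma integral_abs_mult_powr_le:
  assumes p: "p > 1" and f: "memLp M p f" and v: "memLp M p v"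
  shows "(\<integral>x. \<bar>f x\<bar> * \<bar>v x\<bar> powr (p - 1) \<partial>M) \<le> Lp_norm M p f * Lp_norm M p v powr (p - 1)"
proof (cases "Lp_norm M p f = 0 \<or> Lp_norm M p v = 0")
  case True
  then have "AE x in M. \<bar>f x\<bar> * \<bar>v x\<bar> powr (p - 1) = 0"
    using AE_eq_0_if_Lp_norm_eq_0[OF _ f] AE_eq_0_if_Lp_norm_eq_0[OF _ v] p by (auto elim: AE_mp)
  then have "(\<integral>x. \<bar>f x\<bar> * \<bar>v x\<bar> powr (p - 1) \<partial>M) = 0"
    by (simp add: integral_eq_zero_AE)
  then show ?thesis by (simp add: Lp_norm_nonneg)
next
  case False
  define \<alpha> where "\<alpha> = Lp_norm M p f"
  define \<beta> where "\<beta> = Lp_norm M p v"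
  have \<alpha>\<beta>: "\<alpha> > 0" "\<beta> > 0" using False Lp_norm_nonneg[of M p f] Lp_norm_nonneg[of M p v]
    by (auto simp: \<alpha>_def \<beta>_def)
  define q where "q = p / (p - 1)"
  have q: "q > 1" "1 / p + 1 / q = 1" "(p - 1) * q = p" using p by (auto simp: q_def field_simps)
  have fi: "integrable M (\<lambda>x. \<bar>f x\<bar> powr p)" and vi: "integrable M (\<lambda>x. \<bar>v x\<bar> powr p)"
    using f v by (auto simp: memLp_def)
  have "integrable M (\<lambda>x. \<bar>f x * sgn_powr p (v x)\<bar>)"
    by (intro integrable_abs integrable_mult_sgn_powr p f v)
  then have fvi: "integrable M (\<lambda>x. \<bar>f x\<bar> * \<bar>v x\<bar> powr (p - 1))"
    by (simp add: abs_mult abs_sgn_powr)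
  have young: "\<bar>f x\<bar> * \<bar>v x\<bar> powr (p - 1) / (\<alpha> * \<beta> powr (p - 1))
      \<le> \<bar>f x\<bar> powr p / (p * \<alpha> powr p) + \<bar>v x\<bar> powr p / (q * \<beta> powr p)" for x
    by (rule Youngs_inequality_scaled[OF \<alpha>\<beta> p q])
  have "(\<integral>x. \<bar>f x\<bar> * \<bar>v x\<bar> powr (p - 1) \<partial>M) / (\<alpha> * \<beta> powr (p - 1))
      = (\<integral>x. \<bar>f x\<bar> * \<bar>v x\<bar> powr (p - 1) / (\<alpha> * \<beta> powr (p - 1)) \<partial>M)"
    by simp
  also have "\<dots> \<le> (\<integral>x. \<bar>f x\<bar> powr p / (p * \<alpha> powr p) + \<bar>v x\<bar> powr p / (q * \<beta> powr p) \<partial>M)"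
    using fvi fi vi by (intro integral_mono young) auto
  also have "\<dots> = Lp_norm M p f powr p / (p * \<alpha> powr p) + Lp_norm M p v powr p / (q * \<beta> powr p)"
    using fi vi p by (simp add: Lp_norm_powr)
  also have "\<dots> = 1"
    using \<alpha>\<beta> p q by (simp add: \<alpha>_def[symmetric] \<beta>_def[symmetric])
  finally show ?thesis using \<alpha>\<beta> by (simp add: \<alpha>_def \<beta>_def divide_le_eq)
qed

definition Lp_linear :: "'a measure \<Rightarrow> real \<Rightarrow> (('a \<Rightarrow> real) \<Rightarrow> real) \<Rightarrow> bool" where
  "Lp_linear M p \<phi> \<longleftrightarrow> (\<forall>f g a b. memLp M p f \<longrightarrow> memLp M p g \<longrightarrow>
     \<phi> (\<lambda>x. a * f x + b * g x) = a * \<phi> f + b * \<phi> g)"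

lemma Lp_dual_iff:
  "\<phi> \<in> Lp_dual M p \<longleftrightarrow> Lp_linear M p \<phi> \<and> (\<exists>C. \<forall>f. memLp M p f \<longrightarrow> \<bar>\<phi> f\<bar> \<le> C * Lp_norm M p f)"
  unfolding Lp_dual_def Lp_linear_def by blast

lemma Lp_dualI:
  "Lp_linear M p \<phi> \<Longrightarrow> (\<And>f. memLp M p f \<Longrightarrow> \<bar>\<phi> f\<bar> \<le> C * Lp_norm M p f) \<Longrightarrow> \<phi> \<in> Lp_dual M p"
  unfolding Lp_dual_iff by blast

lemma Lp_dual_diff:
  assumes "\<phi> \<in> Lp_dual M p" "memLp M p f" "memLp M p g"
  shows "\<phi> (\<lambda>x. f x - g x) = \<phi> f - \<phi> g"
proof -
  have "\<phi> (\<lambda>x. 1 * f x + (-1) * g x) = 1 * \<phi> f + (-1) * \<phi> g"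
    using assms unfolding Lp_dual_iff Lp_linear_def by blast
  then show ?thesis by simp
qed

lemma Lp_weak_conv_diff_tendsto_0:
  assumes "Lp_weak_conv M p u U" "\<And>k. memLp M p (u k)" "memLp M p U" "\<phi> \<in> Lp_dual M p"
  shows "(\<lambda>k. \<phi> (\<lambda>x. u k x - U x)) \<longlonglongrightarrow> 0"
proof -
  have "(\<lambda>k. \<phi> (u k) - \<phi> U) \<longlonglongrightarrow> \<phi> U - \<phi> U"
    using assms unfolding Lp_weak_conv_def by (intro tendsto_diff) auto
  then show ?thesis using assms by (simp add: Lp_dual_diff)
qed

definition dual_functional :: "'a measure \<Rightarrow> real \<Rightarrow> ('a \<Rightarrow> real) \<Rightarrow> ('a \<Rightarrow> real) \<Rightarrow> real" where
  "dual_functional M p v f = (\<integral>x. f x * sgn_powr p (v x) \<partial>M)"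

lemma Lp_linear_dual_functional:
  assumes p: "p > 1" and v: "memLp M p v"
  shows "Lp_linear M p (dual_functional M p v)"
  unfolding Lp_linear_def
proof (intro allI impI)
  fix f g :: "'a \<Rightarrow> real" and a b :: real
  assume f: "memLp M p f" and g: "memLp M p g"
  have "dual_functional M p v (\<lambda>x. a * f x + b * g x)
      = (\<integral>x. a * (f x * sgn_powr p (v x)) + b * (g x * sgn_powr p (v x)) \<partial>M)"
    unfolding dual_functional_def by (simp add: algebra_simps)
  also have "\<dots> = a * dual_functional M p v f + b * dual_functional M p v g"
    using integrable_mult_sgn_powr[OF p f v] integrable_mult_sgn_powr[OF p g v]
    by (simp add: dual_functional_def)
  finally show "dual_functional M p v (\<lambda>x. a * f x + b * g x)
      = a * dual_functional M p v f + b * dual_functional M p v g" .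
qed

lemma abs_dual_functional_le:
  assumes p: "p > 1" and v: "memLp M p v" and f: "memLp M p f"
  shows "\<bar>dual_functional M p v f\<bar> \<le> Lp_norm M p v powr (p - 1) * Lp_norm M p f"
proof -
  have "\<bar>dual_functional M p v f\<bar> \<le> (\<integral>x. \<bar>f x * sgn_powr p (v x)\<bar> \<partial>M)"
    unfolding dual_functional_def using integral_norm_bound[of M "\<lambda>x. f x * sgn_powr p (v x)"] by simp
  also have "\<dots> = (\<integral>x. \<bar>f x\<bar> * \<bar>v x\<bar> powr (p - 1) \<partial>M)" by (simp add: abs_mult abs_sgn_powr)
  also have "\<dots> \<le> Lp_norm M p f * Lp_norm M p v powr (p - 1)"
    by (rule integral_abs_mult_powr_le[OF p f v])
  finally show ?thesis by (simp add: mult.commute)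
qed

lemma dual_functional_in_Lp_dual:
  assumes "p > 1" "memLp M p v" shows "dual_functional M p v \<in> Lp_dual M p"
  using Lp_linear_dual_functional[OF assms] abs_dual_functional_le[OF assms] by (rule Lp_dualI)

lemma dual_functional_self:
  "p > 1 \<Longrightarrow> dual_functional M p v v = (\<integral>x. \<bar>v x\<bar> powr p \<partial>M)"
  by (simp add: dual_functional_def mult_sgn_powr_self)

lemma norming_functional_exists:
  assumes p: "p > 1" and w: "memLp M p w"
  obtains \<psi> where "Lp_linear M p \<psi>" "\<And>f. memLp M p f \<Longrightarrow> \<bar>\<psi> f\<bar> \<le> Lp_norm M p f"
    "\<psi> w = Lp_norm M p w"
proof (cases "Lp_norm M p w = 0")
  case True
  then show ?thesis by (intro that[of "\<lambda>f. 0"]) (auto simp: Lp_linear_def Lp_norm_nonneg)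
next
  case False
  define N where "N = Lp_norm M p w"
  have N: "N > 0" using False Lp_norm_nonneg[of M p w] by (simp add: N_def)
  show ?thesis
  proof (rule that[of "\<lambda>f. dual_functional M p w f / N powr (p - 1)"])
    show "Lp_linear M p (\<lambda>f. dual_functional M p w f / N powr (p - 1))"
      using Lp_linear_dual_functional[OF p w] unfolding Lp_linear_def by (simp add: add_divide_distrib)
    show "\<bar>dual_functional M p w f / N powr (p - 1)\<bar> \<le> Lp_norm M p f" if "memLp M p f" for f
      using abs_dual_functional_le[OF p w that] N
      by (simp add: N_def[symmetric] divide_le_eq abs_divide mult.commute)
    have "dual_functional M p w w = N powr p"
      using p Lp_norm_powr[of p M w] by (simp add: dual_functional_self N_def)
    also have "\<dots> = N powr (p - 1) * N"
      using N by (simp add: powr_diff)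
    finally have "dual_functional M p w w = N powr (p - 1) * N" .
    then show "dual_functional M p w w / N powr (p - 1) = Lp_norm M p w"
      using N by (simp add: N_def)
  qed
qed

lemma dependent_choice_prefixes:
  assumes "\<And>xs. \<exists>k. P xs k"
  obtains f where "\<And>m. P (map f [0..<m]) (f m)"
proof -
  define ch where "ch xs = (SOME k. P xs k)" for xs
  define L where "L = rec_nat [] (\<lambda>_ xs. xs @ [ch xs])"
  define f where "f m = ch (L m)" for m
  have "L m = map f [0..<m]" for m
    by (induction m) (simp_all add: L_def f_def)
  moreover have "P xs (ch xs)" for xs
    unfolding ch_def using assms by (rule someI_ex)
  ultimately have "P (map f [0..<m]) (f m)" for m by (metis f_def)
  then show ?thesis by (rule that)
qed

lemma gliding_hump_sums_ge:
  fixes t :: "nat \<Rightarrow> real"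
  assumes t: "t sums s" and t_m: "t m = (1/4) ^ m * N"
    and before: "\<And>j. j < m \<Longrightarrow> \<bar>t j\<bar> \<le> (1/4) ^ j"
    and after: "\<And>j. m < j \<Longrightarrow> \<bar>t j\<bar> \<le> (1/4) ^ j * N"
  shows "2/3 * ((1/4) ^ m * N) - 4/3 \<le> s"
proof -
  define c :: "nat \<Rightarrow> real" where "c j = (1/4) ^ j" for j
  have c: "c sums (4/3)" unfolding c_def using geometric_sums[of "1/4::real"] by simp
  define e where "e j = c j + (if m < j then c j * N else 0)" for j
  \<comment> \<open>d keeps the hump t m and bounds every other term from below by -e j\<close>
  define d where "d j = (if j = m then c m * N + e j else 0) - e j" for j
  have d_le: "d j \<le> t j" for j
  proof (cases "j = m")
    case False
    then have "\<bar>t j\<bar> \<le> e j"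
      using before[of j] after[of j] by (cases "j < m") (auto simp: e_def c_def intro: add_increasing)
    then show ?thesis using False by (simp add: d_def)
  qed (simp add: d_def t_m c_def)
  have "(\<lambda>i. (1/4) ^ Suc m * N * c i) sums ((1/4) ^ Suc m * N * (4/3))"
    by (intro sums_mult c)
  then have "(\<lambda>i. (\<lambda>j. if m < j then c j * N else 0) (i + Suc m)) sums (c m * N / 3)"
    by (simp add: c_def power_add mult_ac)
  then have "(\<lambda>j. if m < j then c j * N else 0) sums (c m * N / 3)"
    by (subst (asm) sums_iff_shift) simp
  then have "e sums (4/3 + c m * N / 3)"
    unfolding e_def by (intro sums_add c)
  then have "d sums (c m * N + e m - (4/3 + c m * N / 3))"
    unfolding d_def using sums_single[of m "\<lambda>j. c m * N + e j"] by (intro sums_diff) auto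
  then have "c m * N + e m - (4/3 + c m * N / 3) \<le> s"
    by (rule sums_le[OF d_le _ t])
  moreover have "0 \<le> c m" by (simp add: c_def)
  ultimately show ?thesis unfolding c_def[symmetric] e_def by (simp add: algebra_simps)
qed

lemma summable_weighted_functionals:
  assumes "summable c" "\<And>j. c j \<ge> 0" "\<And>j. \<bar>\<Psi> j f\<bar> \<le> Lp_norm M p f"
  shows "summable (\<lambda>j. \<bar>c j * \<Psi> j f\<bar>)"
  by (rule summable_comparison_test'[OF summable_mult2[OF assms(1), of "Lp_norm M p f"]])
    (use assms in \<open>auto simp: abs_mult intro: mult_left_mono\<close>)

lemma weighted_functional_sum_in_Lp_dual:
  assumes c: "summable c" "\<And>j. c j \<ge> 0"
    and \<Psi>: "\<And>j. Lp_linear M p (\<Psi> j)" "\<And>j f. memLp M p f \<Longrightarrow> \<bar>\<Psi> j f\<bar> \<le> Lp_norm M p f"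
  shows "(\<lambda>f. \<Sum>j. c j * \<Psi> j f) \<in> Lp_dual M p"
proof (rule Lp_dualI)
  have sm: "summable (\<lambda>j. c j * \<Psi> j f)" if "memLp M p f" for f
    using summable_weighted_functionals[where \<Psi>=\<Psi>, OF c \<Psi>(2)[OF that]] by (rule summable_rabs_cancel)
  show "Lp_linear M p (\<lambda>f. \<Sum>j. c j * \<Psi> j f)"
    unfolding Lp_linear_def
  proof (intro allI impI)
    fix f g :: "'a \<Rightarrow> real" and a b :: real
    assume f: "memLp M p f" and g: "memLp M p g"
    have "(\<Sum>j. c j * \<Psi> j (\<lambda>x. a * f x + b * g x)) = (\<Sum>j. a * (c j * \<Psi> j f) + b * (c j * \<Psi> j g))"
      using \<Psi>(1) f g unfolding Lp_linear_def by (simp add: algebra_simps)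
    also have "\<dots> = a * (\<Sum>j. c j * \<Psi> j f) + b * (\<Sum>j. c j * \<Psi> j g)"
      using sm[OF f] sm[OF g] by (simp add: suminf_add[symmetric] summable_mult suminf_mult)
    finally show "(\<Sum>j. c j * \<Psi> j (\<lambda>x. a * f x + b * g x)) = a * (\<Sum>j. c j * \<Psi> j f) + b * (\<Sum>j. c j * \<Psi> j g)" .
  qed
  fix f assume f: "memLp M p f"
  have "\<bar>\<Sum>j. c j * \<Psi> j f\<bar> \<le> (\<Sum>j. \<bar>c j * \<Psi> j f\<bar>)"
    by (rule summable_rabs[OF summable_weighted_functionals[where \<Psi>=\<Psi>, OF c \<Psi>(2)[OF f]]])
  also have "\<dots> \<le> (\<Sum>j. c j * Lp_norm M p f)"
    using c \<Psi>(2)[OF f] summable_weighted_functionals[where \<Psi>=\<Psi>, OF c \<Psi>(2)[OF f]]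
    by (intro suminf_le summable_mult2) (auto simp: abs_mult intro: mult_left_mono)
  also have "\<dots> = suminf c * Lp_norm M p f"
    using c by (simp add: suminf_mult2)
  finally show "\<bar>\<Sum>j. c j * \<Psi> j f\<bar> \<le> suminf c * Lp_norm M p f" .
qed

lemma unbounded_imp_exceeds_beyond:
  fixes f :: "nat \<Rightarrow> real"
  assumes "\<nexists>B. \<forall>k. f k \<le> B"
  shows "\<exists>k\<ge>K. B < f k"
proof -
  from assms obtain k where "\<not> f k \<le> max B (Max (f ` {..<K}))" by blast
  then have k: "max B (Max (f ` {..<K})) < f k" by (simp only: not_le)
  moreover have "K \<le> k"
  proof (rule ccontr)
    assume "\<not> K \<le> k"
    then have "f k \<le> Max (f ` {..<K})" by (intro Max_ge) auto
    with k show False by simp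
  qed
  ultimately show ?thesis by auto
qed

lemma gliding_hump_ge:
  assumes \<Phi>: "\<And>j f. memLp M p f \<Longrightarrow> \<bar>\<Phi> j f\<bar> \<le> Lp_norm M p f"
    and W: "memLp M p W" and hump: "\<Phi> m W = Lp_norm M p W"
    and large: "(3 * real m + 6) * 4 ^ m \<le> Lp_norm M p W"
    and small: "\<And>j. j < m \<Longrightarrow> \<bar>\<Phi> j W\<bar> \<le> 1"
  shows "real m \<le> (\<Sum>j. (1/4) ^ j * \<Phi> j W)"
proof -
  have "3 * real m + 6 = (1/4) ^ m * ((3 * real m + 6) * 4 ^ m)"
    by (simp add: field_simps)
  also have "\<dots> \<le> (1/4) ^ m * Lp_norm M p W"
    by (rule mult_left_mono[OF large]) simp
  finally have hump_large: "3 * real m + 6 \<le> (1/4) ^ m * Lp_norm M p W" .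
  have "summable (\<lambda>j. \<bar>(1/4) ^ j * \<Phi> j W\<bar>)"
    by (rule summable_weighted_functionals[where \<Psi>=\<Phi>, OF summable_geometric _ \<Phi>[OF W]]) simp_all
  then have "(\<lambda>j. (1/4) ^ j * \<Phi> j W) sums (\<Sum>j. (1/4) ^ j * \<Phi> j W)"
    by (rule summable_sums[OF summable_rabs_cancel])
  then have "2/3 * ((1/4) ^ m * Lp_norm M p W) - 4/3 \<le> (\<Sum>j. (1/4) ^ j * \<Phi> j W)"
  proof (rule gliding_hump_sums_ge)
    show "(1/4) ^ m * \<Phi> m W = (1/4) ^ m * Lp_norm M p W" by (simp add: hump)
    show "\<bar>(1/4) ^ j * \<Phi> j W\<bar> \<le> (1/4) ^ j" if "j < m" for j
      using small[OF that] by (simp add: abs_mult)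
    show "\<bar>(1/4) ^ j * \<Phi> j W\<bar> \<le> (1/4) ^ j * Lp_norm M p W" for j
      using \<Phi>[OF W] by (simp add: abs_mult)
  qed
  moreover have "0 \<le> real m" by simp
  ultimately show ?thesis using hump_large by linarith
qed

text \<open>Uniform boundedness of weakly null sequences, by a gliding hump: if the norms were
  unbounded, a subsequence w (k m) with rapidly growing norms, chosen so that the norming
  functionals of the earlier terms are small on it, would make the weighted sum of those norming
  functionals unbounded along the subsequence.\<close>

lemma Lp_weakly_null_imp_bounded:
  assumes p: "p > 1" and w: "\<And>k. memLp M p (w k)"
    and null: "\<And>\<phi>. \<phi> \<in> Lp_dual M p \<Longrightarrow> (\<lambda>k. \<phi> (w k)) \<longlonglongrightarrow> 0"
  shows "\<exists>B. \<forall>k. Lp_norm M p (w k) \<le> B"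
proof (rule ccontr)
  assume unbounded: "\<nexists>B. \<forall>k. Lp_norm M p (w k) \<le> B"
  have "\<exists>\<psi>. Lp_linear M p \<psi> \<and> (\<forall>f. memLp M p f \<longrightarrow> \<bar>\<psi> f\<bar> \<le> Lp_norm M p f) \<and> \<psi> (w k) = Lp_norm M p (w k)" for k
    using norming_functional_exists[OF p w, of k] by blast
  then obtain \<Psi> where \<Psi>: "\<And>k. Lp_linear M p (\<Psi> k)" "\<And>k f. memLp M p f \<Longrightarrow> \<bar>\<Psi> k f\<bar> \<le> Lp_norm M p f"
      "\<And>k. \<Psi> k (w k) = Lp_norm M p (w k)"
    by metis
  have \<Psi>_dual: "\<Psi> k \<in> Lp_dual M p" for k
    using \<Psi>(1) by (rule Lp_dualI[where C=1]) (use \<Psi>(2) in auto)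
  define good where "good ks k \<longleftrightarrow> length ks \<le> k \<and> (3 * real (length ks) + 6) * 4 ^ length ks \<le> Lp_norm M p (w k)
      \<and> (\<forall>j\<in>set ks. \<bar>\<Psi> j (w k)\<bar> \<le> 1)" for ks k
  have ex_good: "\<exists>k. good ks k" for ks
  proof -
    have "\<forall>\<^sub>F k in sequentially. \<forall>j\<in>set ks. \<bar>\<Psi> j (w k)\<bar> < 1"
    proof (rule eventually_ball_finite[OF finite_set], intro ballI)
      fix j
      have "(\<lambda>k. \<bar>\<Psi> j (w k)\<bar>) \<longlonglongrightarrow> \<bar>0\<bar>" by (intro tendsto_rabs null \<Psi>_dual)
      then show "\<forall>\<^sub>F k in sequentially. \<bar>\<Psi> j (w k)\<bar> < 1" by (rule order_tendstoD) simp
    qed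
    then obtain K where K: "\<And>k. K \<le> k \<Longrightarrow> \<forall>j\<in>set ks. \<bar>\<Psi> j (w k)\<bar> < 1"
      unfolding eventually_sequentially by blast
    obtain k where "max K (length ks) \<le> k" "(3 * real (length ks) + 6) * 4 ^ length ks < Lp_norm M p (w k)"
      using unbounded_imp_exceeds_beyond[OF unbounded] by blast
    then show ?thesis using K[of k] unfolding good_def by (auto intro: less_imp_le)
  qed
  obtain kk where "\<And>m. good (map kk [0..<m]) (kk m)"
    using dependent_choice_prefixes[of good] ex_good by blast
  then have kk_ge: "m \<le> kk m" and kk_large: "(3 * real m + 6) * 4 ^ m \<le> Lp_norm M p (w (kk m))"
    and kk_small: "\<And>j. j < m \<Longrightarrow> \<bar>\<Psi> (kk j) (w (kk m))\<bar> \<le> 1" for m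
    by (auto simp: good_def)
  define \<phi> where "\<phi> f = (\<Sum>j. (1/4) ^ j * \<Psi> (kk j) f)" for f
  have "\<phi> \<in> Lp_dual M p"
    unfolding \<phi>_def by (rule weighted_functional_sum_in_Lp_dual[OF summable_geometric _ \<Psi>(1,2)]) simp_all
  then have "(\<lambda>k. \<bar>\<phi> (w k)\<bar>) \<longlonglongrightarrow> \<bar>0\<bar>" by (intro tendsto_rabs null)
  then have "\<forall>\<^sub>F k in sequentially. \<bar>\<phi> (w k)\<bar> < 1" by (rule order_tendstoD) simp
  then obtain K where "\<And>k. K \<le> k \<Longrightarrow> \<bar>\<phi> (w k)\<bar> < 1"
    unfolding eventually_sequentially by blast
  moreover have "K \<le> kk (Suc K)" using kk_ge[of "Suc K"] by simp
  ultimately have "\<bar>\<phi> (w (kk (Suc K)))\<bar> < 1" by blast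
  moreover have "real (Suc K) \<le> \<phi> (w (kk (Suc K)))"
    unfolding \<phi>_def using \<Psi>(2) w \<Psi>(3) kk_large kk_small by (rule gliding_hump_ge)
  ultimately show False by simp
qed

lemma Lp_weak_conv_imp_bounded:
  assumes p: "p > 1" and "Lp_weak_conv M p u U" "\<And>k. memLp M p (u k)" "memLp M p U"
  shows "\<exists>R. \<forall>k. Lp_norm M p (\<lambda>x. u k x - U x) \<le> R"
  using p
proof (rule Lp_weakly_null_imp_bounded)
  show "memLp M p (\<lambda>x. u k x - U x)" for k using assms p by (intro memLp_diff) auto
qed (rule Lp_weak_conv_diff_tendsto_0[OF assms(2-4)])

lemma dual_functional_cross_le:
  assumes p: "p \<ge> 3" and U: "memLp M p U" and w: "memLp M p w"
  shows "p * dual_functional M p U w + p * dual_functional M p w U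
    \<le> (\<integral>x. \<bar>U x + w x\<bar> powr p \<partial>M) - (\<integral>x. \<bar>U x\<bar> powr p \<partial>M) - (\<integral>x. \<bar>w x\<bar> powr p \<partial>M)"
proof -
  have p1: "p > 1" using p by simp
  have "memLp M p (\<lambda>x. U x + w x)"
    using memLp_linear_combination[OF _ U w, of 1 1] p by simp
  then have int: "integrable M (\<lambda>x. \<bar>U x + w x\<bar> powr p)" "integrable M (\<lambda>x. \<bar>U x\<bar> powr p)"
    "integrable M (\<lambda>x. \<bar>w x\<bar> powr p)"
    using U w by (auto simp: memLp_def)
  have "p * dual_functional M p U w + p * dual_functional M p w U
      = (\<integral>x. p * sgn_powr p (U x) * w x + p * sgn_powr p (w x) * U x \<partial>M)"
    using integrable_mult_sgn_powr[OF p1 w U] integrable_mult_sgn_powr[OF p1 U w]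
    by (simp add: dual_functional_def algebra_simps)
  also have "\<dots> \<le> (\<integral>x. \<bar>U x + w x\<bar> powr p - \<bar>U x\<bar> powr p - \<bar>w x\<bar> powr p \<partial>M)"
    using integrable_mult_sgn_powr[OF p1 w U] integrable_mult_sgn_powr[OF p1 U w] int
    by (intro integral_mono sgn_powr_cross_le_abs_powr_add[OF p])
      (auto simp: algebra_simps)
  also have "\<dots> = (\<integral>x. \<bar>U x + w x\<bar> powr p \<partial>M) - (\<integral>x. \<bar>U x\<bar> powr p \<partial>M) - (\<integral>x. \<bar>w x\<bar> powr p \<partial>M)"
    using int by simp
  finally show ?thesis .
qed

lemma integral_abs_powr_add_scaled_le:
  assumes p: "p > 2" and t: "0 \<le> t" "t \<le> 1" and U: "memLp M p U" and w: "memLp M p w"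
  shows "(\<integral>x. \<bar>w x + t * U x\<bar> powr p \<partial>M) \<le> (\<integral>x. \<bar>w x\<bar> powr p \<partial>M) + p * t * dual_functional M p w U
    + p * (p - 1) / 2 * 2 powr p * t\<^sup>2 * ((\<integral>x. \<bar>U x\<bar> powr p \<partial>M) + (\<integral>x. \<bar>w x\<bar> powr p \<partial>M))"
proof -
  have "memLp M p (\<lambda>x. w x + t * U x)"
    using memLp_linear_combination[OF _ w U, of 1 t] p by simp
  then have int: "integrable M (\<lambda>x. \<bar>w x + t * U x\<bar> powr p)" "integrable M (\<lambda>x. \<bar>U x\<bar> powr p)"
    "integrable M (\<lambda>x. \<bar>w x\<bar> powr p)" "integrable M (\<lambda>x. sgn_powr p (w x) * U x)"
    using U w p integrable_mult_sgn_powr[OF _ U w] by (auto simp: memLp_def mult.commute)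
  have "(\<integral>x. \<bar>w x + t * U x\<bar> powr p \<partial>M) \<le> (\<integral>x. \<bar>w x\<bar> powr p + p * t * sgn_powr p (w x) * U x
      + p * (p - 1) / 2 * 2 powr p * t\<^sup>2 * (\<bar>U x\<bar> powr p + \<bar>w x\<bar> powr p) \<partial>M)"
    by (rule integral_mono[OF int(1)]) (use int abs_powr_add_scaled_le[OF p t] in \<open>auto simp: mult.assoc\<close>)
  also have "\<dots> = (\<integral>x. \<bar>w x\<bar> powr p \<partial>M) + p * t * dual_functional M p w U
      + p * (p - 1) / 2 * 2 powr p * t\<^sup>2 * ((\<integral>x. \<bar>U x\<bar> powr p \<partial>M) + (\<integral>x. \<bar>w x\<bar> powr p \<partial>M))"
    using int by (simp add: dual_functional_def mult_ac)
  finally show ?thesis .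
qed

text \<open>If the pairing of w with U is at most -\<delta>, then moving w by a fixed small multiple
  t of U decreases its norm by a fixed amount c, uniformly for w in a ball: by the Taylor
  bound the p-th power of the norm drops by p t \<delta>/2, and the p-th power is Lipschitz on the ball.\<close>

lemma Lp_norm_decrease_if_dual_functional_negative:
  assumes p: "p > 2" and U: "memLp M p U" and R: "R > 0" and \<delta>: "\<delta> > 0"
  obtains t c where "0 < t" "t \<le> 1" "0 < c"
    "\<And>w. memLp M p w \<Longrightarrow> Lp_norm M p w \<le> R \<Longrightarrow> dual_functional M p w U \<le> -\<delta> \<Longrightarrow>
       c \<le> Lp_norm M p w - Lp_norm M p (\<lambda>x. w x + t * U x)"
proof -
  define I where "I f = (\<integral>x. \<bar>f x\<bar> powr p \<partial>M)" for f :: "'a \<Rightarrow> real"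
  have I_nonneg: "I f \<ge> 0" for f unfolding I_def by (intro integral_nonneg_AE) auto
  have I_eq: "I f = Lp_norm M p f powr p" for f
    unfolding I_def using p by (simp add: Lp_norm_powr)
  define K where "K = p * (p - 1) / 2 * 2 powr p"
  have K: "K > 0" using p by (simp add: K_def)
  define S where "S = I U + R powr p"
  have S: "S \<ge> 0" using I_nonneg[of U] by (simp add: S_def)
  define t where "t = min 1 (p * \<delta> / (2 * K * (S + 1)))"
  have t: "0 < t" "t \<le> 1" using p \<delta> K S by (auto simp: t_def)
  have tKS: "K * t * S \<le> p * \<delta> / 2"
  proof -
    have "t \<le> p * \<delta> / (2 * K * (S + 1))" by (simp add: t_def)
    then have "t * (2 * K * (S + 1)) \<le> p * \<delta>" using K S by (simp add: le_divide_eq)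
    moreover have "K * t * S \<le> K * t * (S + 1)" using K t by simp
    ultimately show ?thesis by (simp add: algebra_simps)
  qed
  define \<eta> where "\<eta> = p * t * \<delta> / 2"
  have \<eta>: "\<eta> > 0" using p t \<delta> by (simp add: \<eta>_def)
  show ?thesis
  proof (rule that[OF t, of "\<eta> / (p * R powr (p - 1))"])
    show "0 < \<eta> / (p * R powr (p - 1))" using \<eta> p R by simp
    fix w assume w: "memLp M p w" and wR: "Lp_norm M p w \<le> R" and neg: "dual_functional M p w U \<le> -\<delta>"
    have "I w \<le> R powr p"
      using wR p by (simp add: I_eq Lp_norm_nonneg powr_mono2)
    then have "K * t\<^sup>2 * (I U + I w) \<le> t * (K * t * S)"
      using K t by (simp add: S_def power2_eq_square mult_left_mono)
    also have "\<dots> \<le> t * (p * \<delta> / 2)" using tKS t by (intro mult_left_mono) auto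
    finally have "K * t\<^sup>2 * (I U + I w) \<le> t * (p * \<delta> / 2)" .
    moreover have "p * t * dual_functional M p w U \<le> p * t * (-\<delta>)"
      using neg p t by (intro mult_left_mono) auto
    moreover have "I (\<lambda>x. w x + t * U x) \<le> I w + p * t * dual_functional M p w U + K * t\<^sup>2 * (I U + I w)"
      unfolding I_def K_def using integral_abs_powr_add_scaled_le[OF p less_imp_le[OF t(1)] t(2) U w] .
    ultimately have "Lp_norm M p (\<lambda>x. w x + t * U x) powr p \<le> Lp_norm M p w powr p - \<eta>"
      unfolding I_eq[symmetric] \<eta>_def by (simp add: algebra_simps)
    then show "\<eta> / (p * R powr (p - 1)) \<le> Lp_norm M p w - Lp_norm M p (\<lambda>x. w x + t * U x)"
      using p wR \<eta> by (intro powr_gap_imp_gap) (auto simp: Lp_norm_nonneg)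
  qed
qed

lemma Lp_Delta_conv_dual_functional_eventually_gt:
  assumes p: "p > 2" and u: "\<And>k. memLp M p (u k)" and U: "memLp M p U"
    and Delta: "Lp_Delta_conv M p u U" and bounded: "\<And>k. Lp_norm M p (\<lambda>x. u k x - U x) \<le> R"
    and \<delta>: "\<delta> > 0"
  shows "\<forall>\<^sub>F k in sequentially. -\<delta> < dual_functional M p (\<lambda>x. u k x - U x) U"
proof -
  have "0 < max R 1" by simp
  then obtain t c where t: "0 < t" "t \<le> 1" and c: "0 < c" and decrease:
    "\<And>w. memLp M p w \<Longrightarrow> Lp_norm M p w \<le> max R 1 \<Longrightarrow> dual_functional M p w U \<le> -\<delta> \<Longrightarrow>
       c \<le> Lp_norm M p w - Lp_norm M p (\<lambda>x. w x + t * U x)"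
    by (rule Lp_norm_decrease_if_dual_functional_negative[OF p U _ \<delta>]) blast
  have "memLp M p (\<lambda>x. (1 - t) * U x)"
    using memLp_linear_combination[OF _ U U, of "1 - t" 0] p by simp
  then have "limsup (\<lambda>k. ereal (Lp_norm M p (\<lambda>x. u k x - U x) - Lp_norm M p (\<lambda>x. u k x - (1 - t) * U x))) < c"
    using Delta c unfolding Lp_Delta_conv_def by (auto intro: le_less_trans)
  then have "\<forall>\<^sub>F k in sequentially. Lp_norm M p (\<lambda>x. u k x - U x) - Lp_norm M p (\<lambda>x. u k x - (1 - t) * U x) < c"
    by (auto dest: Limsup_lessD)
  then show ?thesis
  proof (rule eventually_mono)
    fix k
    assume small: "Lp_norm M p (\<lambda>x. u k x - U x) - Lp_norm M p (\<lambda>x. u k x - (1 - t) * U x) < c"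
    have shift: "(\<lambda>x. (u k x - U x) + t * U x) = (\<lambda>x. u k x - (1 - t) * U x)"
      by (simp add: algebra_simps)
    show "-\<delta> < dual_functional M p (\<lambda>x. u k x - U x) U"
    proof (rule ccontr)
      assume "\<not> -\<delta> < dual_functional M p (\<lambda>x. u k x - U x) U"
      then have "c \<le> Lp_norm M p (\<lambda>x. u k x - U x) - Lp_norm M p (\<lambda>x. (u k x - U x) + t * U x)"
        using bounded[of k] p by (intro decrease memLp_diff u U) auto
      with small shift show False
        by simp
    qed
  qed
qed

lemma liminf_ereal_nonneg:
  fixes X :: "nat \<Rightarrow> real"
  assumes "\<And>\<delta>. \<delta> > 0 \<Longrightarrow> \<forall>\<^sub>F k in sequentially. -\<delta> < X k"
  shows "0 \<le> liminf (\<lambda>k. ereal (X k))"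
proof (subst le_Liminf_iff, intro allI impI)
  fix y :: ereal assume "y < 0"
  then show "\<forall>\<^sub>F k in sequentially. y < ereal (X k)"
    using assms[of "- real_of_ereal y"] by (cases y) (auto elim: eventually_mono)
qed

theorem theorem4p2:
  fixes M :: "'a measure" and p :: real
    and u :: "nat \<Rightarrow> 'a \<Rightarrow> real" and U :: "'a \<Rightarrow> real"
  assumes "p \<ge> 3"
    and "\<And>k. memLp M p (u k)" and "memLp M p U"
    and "Lp_weak_conv M p u U"
    and "Lp_Delta_conv M p u U"
  shows "liminf (\<lambda>k. ereal ((\<integral>x. \<bar>u k x\<bar> powr p \<partial>M) - (\<integral>x. \<bar>U x\<bar> powr p \<partial>M)
            - (\<integral>x. \<bar>u k x - U x\<bar> powr p \<partial>M))) \<ge> 0"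
proof (rule liminf_ereal_nonneg)
  fix \<delta> :: real assume "\<delta> > 0"
  have p: "p > 1" "p > 2" using assms(1) by auto
  define w where "w k = (\<lambda>x. u k x - U x)" for k
  have w: "memLp M p (w k)" for k unfolding w_def using p by (intro memLp_diff assms(2,3)) auto
  obtain R where R: "\<And>k. Lp_norm M p (w k) \<le> R"
    unfolding w_def using Lp_weak_conv_imp_bounded[OF p(1) assms(4,2,3)] by blast
  have "\<delta> / (2 * p) > 0" using \<open>\<delta> > 0\<close> p by simp
  with R have "\<forall>\<^sub>F k in sequentially. -(\<delta> / (2 * p)) < dual_functional M p (w k) U"
    unfolding w_def by (rule Lp_Delta_conv_dual_functional_eventually_gt[OF p(2) assms(2,3,5)])
  moreover have "(\<lambda>k. dual_functional M p U (w k)) \<longlonglongrightarrow> 0"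
    unfolding w_def
    by (rule Lp_weak_conv_diff_tendsto_0[OF assms(4,2,3) dual_functional_in_Lp_dual[OF p(1) assms(3)]])
  then have "\<forall>\<^sub>F k in sequentially. -(\<delta> / (2 * p)) < dual_functional M p U (w k)"
    using \<open>\<delta> > 0\<close> p by (intro order_tendstoD) auto
  ultimately show "\<forall>\<^sub>F k in sequentially. -\<delta> < (\<integral>x. \<bar>u k x\<bar> powr p \<partial>M)
      - (\<integral>x. \<bar>U x\<bar> powr p \<partial>M) - (\<integral>x. \<bar>u k x - U x\<bar> powr p \<partial>M)"
  proof eventually_elim
    case (elim k)
    have "-\<delta> < p * dual_functional M p U (w k) + p * dual_functional M p (w k) U"
      using elim p by (simp add: field_simps)
    also have "\<dots> \<le> (\<integral>x. \<bar>u k x\<bar> powr p \<partial>M) - (\<integral>x. \<bar>U x\<bar> powr p \<partial>M) - (\<integral>x. \<bar>u k x - U x\<bar> powr p \<partial>M)"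
      using dual_functional_cross_le[OF assms(1,3) w[of k]] by (simp add: w_def)
    finally show ?case .
  qed
qed

end
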